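(* Let $(S,K,I)$ be an active split graph. If $\Phi(S)$ is connected, then $S$ is indecomposable.
   Context: All graphs are finite and simple. A split graph is a graph $S$ whose vertex set is a disjoint union $V(S)=K\,\dot\cup\,I$ with $K$ a clique and $I$ an independent set; $(K,I)$ is called a bipartition of $S$, and $(S,K,I)$ denotes $S$ together with this fixed bipartition. A 2-switch in a graph $G$ is performed on four distinct vertices $a,b,c,d$ with $ab,cd\in E(G)$ and $ac,bd\notin E(G)$: it deletes $ab,cd$ and adds $ac,bd$; $a,b,c,d$ are said to participate in it. A vertex is active in $G$ if it participates in some 2-switch on $G$, otherwise inactive; $act(G)$ is the set of active vertices, and $G$ is active if $act(G)=V(G)$. For a split graph $(S,K,I)$ and distinct $u,v\in I$, $\sigma_{uv}(S)$ is the number of induced subgraphs of $S$ isomorphic to $P_4$ containing both $u$ and $v$. The factor graph $\Phi(S)$ is the loopless multigraph with vertex set $I$ having exactly $\sigma_{uv}(S)$ parallel edges between $u$ and $v$. Graph notions (connected, complete, clique, etc.) applied to $\Phi(S)$ refer to its underlying simple graph, in which $u\sim v$ iff $\sigma_{uv}(S)\ge1$. Tyshkevich composition: for a split graph $(S,K,I)$ and a graph $G$ vertex-disjoint from $S$, $S\circ G$ is the graph with vertex set $V(S)\cup V(G)$ and edge set $E(S)\cup E(G)\cup\{xy: x\in K,\ y\in V(G)\}$. A graph $G$ is decomposable if $G=S\circ H$ for some split graph $S$ and graph $H$, each with at least one vertex; otherwise $G$ is indecomposable. *)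

theory Defs
  imports Main
begin

definition graph :: "'a set \<Rightarrow> 'a set set \<Rightarrow> bool" where
  "graph V E \<longleftrightarrow> finite V \<and> (\<forall>e\<in>E. e \<subseteq> V \<and> card e = 2)"

definition split_graph :: "'a set \<Rightarrow> 'a set set \<Rightarrow> 'a set \<Rightarrow> 'a set \<Rightarrow> bool" where
  "split_graph V E K I \<longleftrightarrow> graph V E \<and> K \<inter> I = {} \<and> K \<union> I = V \<and>
     (\<forall>x\<in>K. \<forall>y\<in>K. x \<noteq> y \<longrightarrow> {x, y} \<in> E) \<and>
     (\<forall>x\<in>I. \<forall>y\<in>I. {x, y} \<notin> E)"

text \<open>A 2-switch can be performed on a,b,c,d (deleting ab, cd and adding ac, bd).\<close>
definition two_switch :: "'a set \<Rightarrow> 'a set set \<Rightarrow> 'a \<Rightarrow> 'a \<Rightarrow> 'a \<Rightarrow> 'a \<Rightarrow> bool" where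
  "two_switch V E a b c d \<longleftrightarrow> a \<in> V \<and> b \<in> V \<and> c \<in> V \<and> d \<in> V \<and>
     distinct [a, b, c, d] \<and> {a, b} \<in> E \<and> {c, d} \<in> E \<and> {a, c} \<notin> E \<and> {b, d} \<notin> E"

definition act :: "'a set \<Rightarrow> 'a set set \<Rightarrow> 'a set" where
  "act V E = {v \<in> V. \<exists>a b c d. two_switch V E a b c d \<and> v \<in> {a, b, c, d}}"

definition active :: "'a set \<Rightarrow> 'a set set \<Rightarrow> bool" where
  "active V E \<longleftrightarrow> act V E = V"

definition induced_P4 :: "'a set set \<Rightarrow> 'a set \<Rightarrow> bool" where
  "induced_P4 E X \<longleftrightarrow> (\<exists>a b c d. distinct [a, b, c, d] \<and> X = {a, b, c, d} \<and>
     E \<inter> Pow X = {{a, b}, {b, c}, {c, d}})"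

definition sigma :: "'a set \<Rightarrow> 'a set set \<Rightarrow> 'a \<Rightarrow> 'a \<Rightarrow> nat" where
  "sigma V E u v = card {X. X \<subseteq> V \<and> u \<in> X \<and> v \<in> X \<and> induced_P4 E X}"

text \<open>Adjacency in the underlying simple graph of the factor graph Phi(S) (vertex set I).\<close>
definition factor_adj :: "'a set \<Rightarrow> 'a set set \<Rightarrow> 'a set \<Rightarrow> 'a \<Rightarrow> 'a \<Rightarrow> bool" where
  "factor_adj V E I u v \<longleftrightarrow> u \<in> I \<and> v \<in> I \<and> u \<noteq> v \<and> sigma V E u v \<ge> 1"

definition factor_connected :: "'a set \<Rightarrow> 'a set set \<Rightarrow> 'a set \<Rightarrow> bool" where
  "factor_connected V E I \<longleftrightarrow> (\<forall>u\<in>I. \<forall>v\<in>I. (factor_adj V E I)\<^sup>*\<^sup>* u v)"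

definition tysh_vertices :: "'a set \<Rightarrow> 'a set \<Rightarrow> 'a set" where
  "tysh_vertices VS VH = VS \<union> VH"

definition tysh_edges :: "'a set set \<Rightarrow> 'a set \<Rightarrow> 'a set set \<Rightarrow> 'a set \<Rightarrow> 'a set set" where
  "tysh_edges ES K EH VH = ES \<union> EH \<union> {{x, y} | x y. x \<in> K \<and> y \<in> VH}"

definition decomposable :: "'a set \<Rightarrow> 'a set set \<Rightarrow> bool" where
  "decomposable V E \<longleftrightarrow> (\<exists>VS ES K I VH EH.
     split_graph VS ES K I \<and> graph VH EH \<and> VS \<inter> VH = {} \<and> VS \<noteq> {} \<and> VH \<noteq> {} \<and>
     V = tysh_vertices VS VH \<and> E = tysh_edges ES K EH VH)"

end

theory Submission
  imports Defs
begin

text \<open>In a composition \<open>S \<circ> H\<close> a vertex of \<open>S\<close> is adjacent to all of \<open>H\<close> if it lies in the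
  clique of \<open>S\<close> and to none of \<open>H\<close> otherwise. Chasing this through the two edges and two
  non-edges of a 2-switch shows that its four vertices lie all in \<open>S\<close> or all in \<open>H\<close>; since
  every induced \<open>P\<^sub>4\<close> carries a 2-switch, the factor graph has no edge between \<open>S\<close> and \<open>H\<close>.
  If the whole graph is active, each side therefore contains a complete 2-switch, and each
  2-switch contains a vertex of the independent set, because its non-edges cannot lie in the
  clique. So the factor graph has vertices on both sides and is disconnected.\<close>

lemma two_switch_sym:
  assumes "two_switch V E a b c d"
  shows "two_switch V E c d a b" "two_switch V E b a d c" "two_switch V E d c b a"
  using assms unfolding two_switch_def by (auto simp: insert_commute)

lemma induced_P4_imp_two_switch:
  assumes "X \<subseteq> V" "induced_P4 E X"
  obtains a b c d where "X = {a, b, c, d}" "two_switch V E a b c d"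
proof -
  obtain a b c d where abcd: "distinct [a, b, c, d]" "X = {a, b, c, d}"
    and edges: "E \<inter> Pow X = {{a, b}, {b, c}, {c, d}}"
    using assms(2) unfolding induced_P4_def by blast
  have "{a, b} \<in> E \<inter> Pow X" "{c, d} \<in> E \<inter> Pow X"
    unfolding edges by simp_all
  moreover have "{a, c} \<notin> E \<inter> Pow X" "{b, d} \<notin> E \<inter> Pow X"
    unfolding edges using abcd(1) by (auto simp: doubleton_eq_iff)
  ultimately have "{a, b} \<in> E" "{c, d} \<in> E" "{a, c} \<notin> E" "{b, d} \<notin> E"
    using abcd(2) by auto
  then have "two_switch V E a b c d"
    using abcd assms(1) unfolding two_switch_def by auto
  with abcd(2) show thesis by (rule that)
qed

lemma factor_adj_imp_induced_P4:
  assumes "factor_adj V E I u v"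
  obtains X where "X \<subseteq> V" "u \<in> X" "v \<in> X" "induced_P4 E X"
proof -
  have "card {X. X \<subseteq> V \<and> u \<in> X \<and> v \<in> X \<and> induced_P4 E X} \<noteq> 0"
    using assms unfolding factor_adj_def sigma_def by simp
  then obtain X where "X \<in> {X. X \<subseteq> V \<and> u \<in> X \<and> v \<in> X \<and> induced_P4 E X}"
    by (metis card.empty equals0I)
  then show thesis using that by blast
qed

lemma split_graph_two_switch_meets_independent:
  assumes "split_graph V E K I" "two_switch V E a b c d"
  shows "a \<in> I \<or> c \<in> I"
proof -
  have "a \<in> V" "c \<in> V" "a \<noteq> c" "{a, c} \<notin> E"
    using assms(2) unfolding two_switch_def by auto
  moreover have "V = K \<union> I" "\<forall>x\<in>K. \<forall>y\<in>K. x \<noteq> y \<longrightarrow> {x, y} \<in> E"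
    using assms(1) unfolding split_graph_def by auto
  ultimately show ?thesis by auto
qed

lemma switch_closed_set_meets_independent:
  assumes "split_graph V E K I" "active V E" "W \<noteq> {}" "W \<subseteq> V"
    and closed: "\<And>a b c d x. two_switch V E a b c d \<Longrightarrow> x \<in> {a, b, c, d} \<Longrightarrow> x \<in> W
                   \<Longrightarrow> {a, b, c, d} \<subseteq> W"
  obtains v where "v \<in> I" "v \<in> W"
proof -
  obtain x where "x \<in> W" using assms(3) by blast
  then have "x \<in> act V E" using assms(2,4) unfolding active_def by blast
  then obtain a b c d where switch: "two_switch V E a b c d" and "x \<in> {a, b, c, d}"
    unfolding act_def by blast
  have "{a, b, c, d} \<subseteq> W"
    using closed[OF switch \<open>x \<in> {a, b, c, d}\<close> \<open>x \<in> W\<close>] .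
  moreover have "a \<in> I \<or> c \<in> I"
    using split_graph_two_switch_meets_independent[OF assms(1) switch] .
  ultimately show thesis using that by blast
qed

locale tyshkevich_composition =
  fixes VS :: "'a set" and ES :: "'a set set" and K I :: "'a set"
    and VH :: "'a set" and EH :: "'a set set"
  assumes split: "split_graph VS ES K I"
    and graph_H: "graph VH EH"
    and disjoint: "VS \<inter> VH = {}"
begin

abbreviation (input) "V \<equiv> tysh_vertices VS VH"
abbreviation (input) "E \<equiv> tysh_edges ES K EH VH"

lemma split_bipartition: "K \<subseteq> VS" "I \<subseteq> VS" "VS \<subseteq> K \<union> I" "K \<inter> I = {}"
  using split unfolding split_graph_def by auto

lemma clique_edge: "x \<in> K \<Longrightarrow> y \<in> K \<Longrightarrow> x \<noteq> y \<Longrightarrow> {x, y} \<in> E"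
  using split unfolding split_graph_def tysh_edges_def by blast

lemma independent_non_edge: "x \<in> I \<Longrightarrow> y \<in> I \<Longrightarrow> {x, y} \<notin> ES"
  using split unfolding split_graph_def by blast

lemma edge_S_subset: "e \<in> ES \<Longrightarrow> e \<subseteq> VS"
  using split unfolding split_graph_def graph_def by blast

lemma edge_H_subset: "e \<in> EH \<Longrightarrow> e \<subseteq> VH"
  using graph_H unfolding graph_def by blast

lemma composition_edgeE:
  assumes "{x, y} \<in> E"
  obtains "{x, y} \<in> ES" | "{x, y} \<in> EH" | "x \<in> K" "y \<in> VH" | "y \<in> K" "x \<in> VH"
  using assms unfolding tysh_edges_def by (auto simp: doubleton_eq_iff)

lemma cross_edge_iff:
  assumes "x \<in> VS" "y \<in> VH"
  shows "{x, y} \<in> E \<longleftrightarrow> x \<in> K" "{y, x} \<in> E \<longleftrightarrow> x \<in> K"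
proof -
  have "{x, y} \<in> E \<longleftrightarrow> x \<in> K"
  proof
    assume "{x, y} \<in> E"
    then show "x \<in> K"
      by (rule composition_edgeE)
        (use assms disjoint split_bipartition edge_S_subset edge_H_subset in blast)+
  qed (use assms in \<open>auto simp: tysh_edges_def\<close>)
  then show "{x, y} \<in> E \<longleftrightarrow> x \<in> K" "{y, x} \<in> E \<longleftrightarrow> x \<in> K"
    by (simp_all add: insert_commute)
qed

lemma independent_neighbour_in_clique:
  assumes "x \<in> I" "y \<in> V" "{x, y} \<in> E"
  shows "y \<in> K"
  using assms(3)
proof (cases rule: composition_edgeE)
  case 1
  moreover have "{x, y} \<notin> ES" if "y \<in> I"
    using independent_non_edge assms(1) that .
  ultimately show ?thesis using edge_S_subset split_bipartition by blast
qed (use assms(1) disjoint split_bipartition edge_H_subset in blast)+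

lemma clique_non_neighbour_independent:
  assumes "x \<in> K" "y \<in> V" "y \<noteq> x" "{x, y} \<notin> E"
  shows "y \<in> I"
proof -
  have "x \<in> VS" using assms(1) split_bipartition by blast
  then have "y \<notin> VH"
    using assms(1,4) cross_edge_iff(1)[of x y] by blast
  moreover have "y \<notin> K"
    using assms(1,3,4) clique_edge by blast
  ultimately show ?thesis
    using assms(2) split_bipartition unfolding tysh_vertices_def by blast
qed

lemma two_switch_edge_within_H:
  assumes ts: "two_switch V E a b c d" and "a \<in> VH"
  shows "b \<in> VH"
proof (rule ccontr)
  assume "b \<notin> VH"
  then have "b \<in> VS" using ts unfolding two_switch_def tysh_vertices_def by blast
  then have "b \<in> K" using ts \<open>a \<in> VH\<close> cross_edge_iff(2) unfolding two_switch_def by blast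
  then have "d \<in> I" using ts clique_non_neighbour_independent unfolding two_switch_def by auto
  then have "c \<in> K"
    using ts independent_neighbour_in_clique unfolding two_switch_def by (auto simp: insert_commute)
  then show False
    using ts \<open>a \<in> VH\<close> cross_edge_iff(2) split_bipartition unfolding two_switch_def by blast
qed

lemma two_switch_non_edge_within_H:
  assumes ts: "two_switch V E a b c d" and "a \<in> VH"
  shows "c \<in> VH"
proof (rule ccontr)
  assume "c \<notin> VH"
  then have "c \<in> VS" using ts unfolding two_switch_def tysh_vertices_def by blast
  then have "c \<in> I"
    using ts \<open>a \<in> VH\<close> cross_edge_iff(2) split_bipartition unfolding two_switch_def by blast
  then have "d \<in> K" using ts independent_neighbour_in_clique unfolding two_switch_def by auto
  then have "b \<in> I"
    using ts clique_non_neighbour_independent unfolding two_switch_def by (auto simp: insert_commute)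
  then show False
    using ts \<open>a \<in> VH\<close> cross_edge_iff(2) split_bipartition unfolding two_switch_def by blast
qed

lemma two_switch_within_H:
  assumes ts: "two_switch V E a b c d" and "x \<in> {a, b, c, d}" "x \<in> VH"
  shows "{a, b, c, d} \<subseteq> VH"
proof -
  have "a \<in> VH \<longleftrightarrow> b \<in> VH" "c \<in> VH \<longleftrightarrow> d \<in> VH" "a \<in> VH \<longleftrightarrow> c \<in> VH"
    using two_switch_edge_within_H two_switch_non_edge_within_H ts two_switch_sym[OF ts]
    by blast+
  then show ?thesis using assms(2,3) by auto
qed

lemma two_switch_within_S:
  assumes ts: "two_switch V E a b c d" and "x \<in> {a, b, c, d}" "x \<in> VS"
  shows "{a, b, c, d} \<subseteq> VS"
proof -
  have "{a, b, c, d} \<subseteq> V" using ts unfolding two_switch_def by blast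
  then show ?thesis
    using two_switch_within_H[OF ts] assms(2,3) disjoint unfolding tysh_vertices_def by blast
qed

lemma factor_path_within_H:
  assumes "(factor_adj V E J)\<^sup>*\<^sup>* u w" "u \<in> VH"
  shows "w \<in> VH"
  using assms
proof (induction rule: rtranclp_induct)
  case (step y z)
  obtain X where X: "X \<subseteq> V" "y \<in> X" "z \<in> X" "induced_P4 E X"
    using factor_adj_imp_induced_P4[OF step.hyps(2)] .
  obtain a b c d where "X = {a, b, c, d}" "two_switch V E a b c d"
    using induced_P4_imp_two_switch[OF X(1,4)] .
  then show ?case using two_switch_within_H X(2,3) step.IH step.prems by blast
qed

lemma factor_graph_disconnected:
  assumes "split_graph V E K' I'" "active V E" "VS \<noteq> {}" "VH \<noteq> {}"
  shows "\<not> factor_connected V E I'"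
proof
  assume connected: "factor_connected V E I'"
  have "VH \<subseteq> V" "VS \<subseteq> V" unfolding tysh_vertices_def by auto
  obtain u where "u \<in> I'" "u \<in> VH"
    using switch_closed_set_meets_independent[OF assms(1,2,4) \<open>VH \<subseteq> V\<close>] two_switch_within_H
    by blast
  moreover obtain v where "v \<in> I'" "v \<in> VS"
    using switch_closed_set_meets_independent[OF assms(1,2,3) \<open>VS \<subseteq> V\<close>] two_switch_within_S
    by blast
  ultimately have "v \<in> VH"
    using factor_path_within_H connected unfolding factor_connected_def by blast
  with \<open>v \<in> VS\<close> show False using disjoint by blast
qed

end

theorem theorem2p6:
  fixes V :: "'a set" and E :: "'a set set" and K I :: "'a set"
  assumes "split_graph V E K I"
    and "active V E"
    and "factor_connected V E I"
  shows "\<not> decomposable V E"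
proof
  assume "decomposable V E"
  then obtain VS ES KS IS VH EH where "split_graph VS ES KS IS" "graph VH EH" "VS \<inter> VH = {}"
    and nonempty: "VS \<noteq> {}" "VH \<noteq> {}"
    and V: "V = tysh_vertices VS VH" and E: "E = tysh_edges ES KS EH VH"
    unfolding decomposable_def by blast
  then interpret tyshkevich_composition VS ES KS IS VH EH
    by unfold_locales
  have "\<not> factor_connected V E I"
    using assms(1,2) nonempty unfolding V E by (rule factor_graph_disconnected)
  with assms(3) show False by contradiction
qed

end
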